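(* In the social learning model, assume there exist $c>0$, $k>0$ and $x_0>0$ such that $G_-(-x)=c\,x^{-k}$ and $G_+(x)=1-c\,x^{-k}$ for all $x>x_0$. Then there exists $\kappa>0$ such that for all $t\ge1$, $$\mathbb{P}_+(a_t=-1)<\kappa\,t^{-2.1}.$$
   Context: Social learning model. A state $\theta\in\{-1,+1\}$ is drawn with $\mathbb{P}(\theta=+1)=\mathbb{P}(\theta=-1)=1/2$. Agents $t=1,2,\dots$ receive private signals $s_t\in\mathbb{R}$ that are i.i.d. conditionally on $\theta$, with CDF $F_+$ if $\theta=+1$ and $F_-$ if $\theta=-1$; $F_+$ and $F_-$ are mutually absolutely continuous. Let $L_t=\log\frac{\mathbb{P}(\theta=+1\mid s_t)}{\mathbb{P}(\theta=-1\mid s_t)}$ be the private log-likelihood ratio, and let $G_+$, $G_-$ denote the CDFs of $L_t$ conditional on $\theta=+1$, $\theta=-1$ respectively. Signals are assumed unbounded: for every $M\in\mathbb{R}$, $\mathbb{P}(L_t>M)>0$ and $\mathbb{P}(L_t<-M)>0$. Agent $t$ observes $a_1,\dots,a_{t-1}$ and her own signal and chooses $a_t\in\{-1,+1\}$ (utility $1$ if $a_t=\theta$, else $0$). The public belief is $\mu_t=\mathbb{P}(\theta=+1\mid a_1,\dots,a_{t-1})$ and $\ell_t=\log\frac{\mu_t}{1-\mu_t}$ (so $\ell_1=0$). In equilibrium $a_t=+1$ iff $\ell_t+L_t>0$, and otherwise $a_t=-1$. Consequently $\ell_{t+1}=\ell_t+D_+(\ell_t)$ if $a_t=+1$ and $\ell_{t+1}=\ell_t+D_-(\ell_t)$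 if $a_t=-1$, where $D_+(x)=\log\frac{1-G_+(-x)}{1-G_-(-x)}$ and $D_-(x)=\log\frac{G_+(-x)}{G_-(-x)}$. We write $\mathbb{P}_+(\cdot)=\mathbb{P}(\cdot\mid\theta=+1)$ and $\mathbb{E}_+$ for the corresponding expectation. *)

theory Defs
  imports "HOL-Probability.Probability"
begin

text \<open>Private log-likelihood ratio of a signal s. With the uniform prior on the state,
  log(P(theta=+1|s)/P(theta=-1|s)) = log (dF_+/dF_-)(s).\<close>
definition llr :: "real measure \<Rightarrow> real measure \<Rightarrow> real \<Rightarrow> real" where
  "llr Fp Fm s = ln (enn2real (RN_deriv Fm Fp s))"

definition llr_cdf :: "real measure \<Rightarrow> (real \<Rightarrow> real) \<Rightarrow> real \<Rightarrow> real" where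
  "llr_cdf F L x = measure F {s \<in> space F. L s \<le> x}"

definition Dplus :: "(real \<Rightarrow> real) \<Rightarrow> (real \<Rightarrow> real) \<Rightarrow> real \<Rightarrow> real" where
  "Dplus Gp Gm x = ln ((1 - Gp (- x)) / (1 - Gm (- x)))"

definition Dminus :: "(real \<Rightarrow> real) \<Rightarrow> (real \<Rightarrow> real) \<Rightarrow> real \<Rightarrow> real" where
  "Dminus Gp Gm x = ln (Gp (- x) / Gm (- x))"

text \<open>Public log-likelihood ratio: pub_ll ... w n is ell_{n+1}; agent n+1 receives the
  signal w n.\<close>
primrec pub_ll :: "(real \<Rightarrow> real) \<Rightarrow> (real \<Rightarrow> real) \<Rightarrow> (real \<Rightarrow> real) \<Rightarrow> (nat \<Rightarrow> real) \<Rightarrow> nat \<Rightarrow> real" where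
  "pub_ll L Gp Gm w 0 = 0"
| "pub_ll L Gp Gm w (Suc n) =
     (let x = pub_ll L Gp Gm w n in
      if x + L (w n) > 0 then x + Dplus Gp Gm x else x + Dminus Gp Gm x)"

text \<open>Action of agent t (t \<ge> 1), using signal w (t-1) and public llr ell_t.\<close>
definition action :: "(real \<Rightarrow> real) \<Rightarrow> (real \<Rightarrow> real) \<Rightarrow> (real \<Rightarrow> real) \<Rightarrow> (nat \<Rightarrow> real) \<Rightarrow> nat \<Rightarrow> int" where
  "action L Gp Gm w t =
     (if pub_ll L Gp Gm w (t - 1) + L (w (t - 1)) > 0 then 1 else -1)"

end

theory Submission
  imports Defs "HOL-Real_Asymp.Real_Asymp"
begin

text \<open>Let \<open>e\<^sub>t\<close> be the probability that agent \<open>t\<close> errs, averaged over the two states. Agent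
  \<open>t + 1\<close> uses the Bayes-optimal cutoff on her private log-likelihood ratio, so she errs no more
  often than an agent who copies \<open>a\<^sub>t\<close> unless her private log-likelihood ratio exceeds \<open>M\<close> in
  absolute value against it. That agent makes a fresh mistake with probability at most
  \<open>exp (- M)\<close>, and repeats a mistake of agent \<open>t\<close> with probability at most \<open>1 - c M\<^sup>-\<^sup>k\<close> by the
  polynomial tails. Hence \<open>e\<^sub>t\<^sub>+\<^sub>1 \<le> exp (- M) + (1 - c M\<^sup>-\<^sup>k) e\<^sub>t\<close> for every \<open>M > x0\<close>, and
  \<open>M = (p + 1) ln (t + 1)\<close> gives \<open>e\<^sub>t = O(t\<^sup>-\<^sup>p)\<close> for every \<open>p > 0\<close>, in particular \<open>p = 2.1\<close>.\<close>

locale llr_model =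
  fixes Fp Fm :: "real measure"
  assumes prob_space_Fp: "prob_space Fp" and prob_space_Fm: "prob_space Fm"
    and sets_Fp [measurable_cong]: "sets Fp = sets borel"
    and sets_Fm [measurable_cong]: "sets Fm = sets borel"
    and ac_Fp_Fm: "absolutely_continuous Fp Fm" and ac_Fm_Fp: "absolutely_continuous Fm Fp"
begin

abbreviation "L \<equiv> llr Fp Fm"
abbreviation "Gp \<equiv> llr_cdf Fp L"
abbreviation "Gm \<equiv> llr_cdf Fm L"

sublocale p: prob_space Fp by (rule prob_space_Fp)
sublocale m: prob_space Fm by (rule prob_space_Fm)

lemma space_Fp [simp]: "space Fp = UNIV"
  using sets_Fp by (metis sets_eq_imp_space_eq space_borel)

lemma space_Fm [simp]: "space Fm = UNIV"
  using sets_Fm by (metis sets_eq_imp_space_eq space_borel)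

lemma borel_measurable_llr [measurable]: "L \<in> borel_measurable borel"
proof -
  have "L \<in> borel_measurable Fm"
    unfolding llr_def by measurable
  then show ?thesis
    using measurable_cong_sets[OF sets_Fm refl] by simp
qed

lemma density_exp_llr: "density Fm (\<lambda>s. ennreal (exp (L s))) = Fp"
proof -
  have finite: "AE s in Fm. RN_deriv Fm Fp s \<noteq> \<infinity>"
    using ac_Fm_Fp sets_Fp sets_Fm by (intro m.RN_deriv_finite p.sigma_finite_measure_axioms) auto
  let ?Z = "{s. RN_deriv Fm Fp s = 0}"
  have "{s \<in> space Fm. RN_deriv Fm Fp s = 0} \<in> sets Fm"
    by measurable
  then have Z: "?Z \<in> sets borel"
    by (simp add: sets_Fm)
  have "emeasure Fp ?Z = emeasure (density Fm (RN_deriv Fm Fp)) ?Z"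
    using ac_Fm_Fp sets_Fp sets_Fm by (subst m.density_RN_deriv) auto
  also have "\<dots> = (\<integral>\<^sup>+ s. RN_deriv Fm Fp s * indicator ?Z s \<partial>Fm)"
    using Z by (subst emeasure_density) (auto simp: sets_Fm)
  also have "\<dots> = 0"
    by (subst nn_integral_cong[where v = "\<lambda>_. 0"]) (auto simp: indicator_def)
  finally have "?Z \<in> null_sets Fp"
    using Z by (auto simp: sets_Fp)
  then have "?Z \<in> null_sets Fm"
    using ac_Fp_Fm by (auto simp: absolutely_continuous_def)
  then have nonzero: "AE s in Fm. RN_deriv Fm Fp s \<noteq> 0"
    by (rule AE_I') auto
  have "density Fm (\<lambda>s. ennreal (exp (L s))) = density Fm (RN_deriv Fm Fp)"
    using finite nonzero
    by (intro density_cong) (auto elim!: AE_mp simp: llr_def less_top zero_less_iff_neq_zero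
        ennreal_enn2real_if enn2real_positive_iff)
  also have "\<dots> = Fp"
    using ac_Fm_Fp sets_Fp sets_Fm by (intro m.density_RN_deriv) auto
  finally show ?thesis .
qed

lemma emeasure_Fp_eq: "emeasure Fp S = (\<integral>\<^sup>+ s. ennreal (exp (L s)) * indicator S s \<partial>Fm)"
  if "S \<in> sets borel"
  using that by (subst density_exp_llr[symmetric], subst emeasure_density) (auto simp: sets_Fm)

lemma exp_mult_measure_Fm_le: "exp a * measure Fm S \<le> measure Fp S"
  if S: "S \<in> sets borel" and ge: "\<And>s. s \<in> S \<Longrightarrow> a \<le> L s"
proof -
  have "ennreal (exp a * measure Fm S) = (\<integral>\<^sup>+ s. ennreal (exp a) * indicator S s \<partial>Fm)"
    using S by (simp add: nn_integral_cmult_indicator sets_Fm m.emeasure_eq_measure ennreal_mult)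
  also have "\<dots> \<le> emeasure Fp S"
    unfolding emeasure_Fp_eq[OF S] by (intro nn_integral_mono) (auto simp: indicator_def ge)
  finally show ?thesis
    by (simp add: p.emeasure_eq_measure)
qed

lemma measure_Fp_le_exp_mult: "measure Fp S \<le> exp b * measure Fm S"
  if S: "S \<in> sets borel" and le: "\<And>s. s \<in> S \<Longrightarrow> L s \<le> b"
proof -
  have "emeasure Fp S \<le> (\<integral>\<^sup>+ s. ennreal (exp b) * indicator S s \<partial>Fm)"
    unfolding emeasure_Fp_eq[OF S] by (intro nn_integral_mono) (auto simp: indicator_def le)
  also have "\<dots> = ennreal (exp b * measure Fm S)"
    using S by (simp add: nn_integral_cmult_indicator sets_Fm m.emeasure_eq_measure ennreal_mult)
  finally show ?thesis
    by (simp add: p.emeasure_eq_measure)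
qed

lemma measure_llr_le_split:
  assumes "a \<le> b" and "M = Fp \<or> M = Fm"
  shows "measure M {s. L s \<le> b} = measure M {s. L s \<le> a} + measure M {s. a < L s \<and> L s \<le> b}"
proof -
  have "{s. L s \<le> b} = {s. L s \<le> a} \<union> {s. a < L s \<and> L s \<le> b}"
    using assms(1) by auto
  then show ?thesis
    using assms(2) by (auto simp: p.finite_measure_Union m.finite_measure_Union sets_Fp sets_Fm disjoint_iff)
qed

text \<open>Up to a positive factor and an additive constant, \<open>exp l * Gp x - Gm x\<close> is the probability
  that an agent with public log-likelihood ratio \<open>l\<close> errs when she uses the cutoff \<open>x\<close>.\<close>

lemma llr_cdf_bayes_cutoff_optimal: "exp l * Gp (- l) - Gm (- l) \<le> exp l * Gp x - Gm x"
proof (cases "- l \<le> x")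
  case True
  let ?S = "{s. - l < L s \<and> L s \<le> x}"
  have "exp (- l) * measure Fm ?S \<le> measure Fp ?S"
    by (rule exp_mult_measure_Fm_le) auto
  then show ?thesis
    using measure_llr_le_split[OF True] by (simp add: llr_cdf_def exp_minus field_simps)
next
  case False
  let ?S = "{s. x < L s \<and> L s \<le> - l}"
  have "measure Fp ?S \<le> exp (- l) * measure Fm ?S"
    by (rule measure_Fp_le_exp_mult) auto
  then show ?thesis
    using measure_llr_le_split[of x "- l"] False by (simp add: llr_cdf_def exp_minus field_simps)
qed

lemma llr_cdf_Fp_le_exp: "Gp (- M) \<le> exp (- M)"
proof -
  have "measure Fp {s. L s \<le> - M} \<le> exp (- M) * measure Fm {s. L s \<le> - M}"
    by (rule measure_Fp_le_exp_mult) auto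
  also have "\<dots> \<le> exp (- M)"
    by (simp add: mult_left_le)
  finally show ?thesis
    by (simp add: llr_cdf_def)
qed

lemma measure_llr_greater: "M = Fp \<or> M = Fm \<Longrightarrow> measure M {s. x < L s} = 1 - llr_cdf M L x"
  using p.prob_compl[of "{s. L s \<le> x}"] m.prob_compl[of "{s. L s \<le> x}"]
  by (auto simp: llr_cdf_def sets_Fp sets_Fm Compl_eq_Diff_UNIV[symmetric] not_le Collect_neg_eq[symmetric])

lemma one_minus_llr_cdf_Fm_le_exp: "1 - Gm M \<le> exp (- M)"
proof -
  have "exp M * measure Fm {s. M < L s} \<le> measure Fp {s. M < L s}"
    by (rule exp_mult_measure_Fm_le) auto
  also have "\<dots> \<le> 1"
    by simp
  finally show ?thesis
    using measure_llr_greater[of Fm M] by (simp add: exp_minus field_simps)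
qed

lemma llr_cdf_strictly_between:
  assumes unbounded: "\<forall>M::real.
       (measure Fp {s \<in> space Fp. L s > M} + measure Fm {s \<in> space Fm. L s > M}) / 2 > 0 \<and>
       (measure Fp {s \<in> space Fp. L s < - M} + measure Fm {s \<in> space Fm. L s < - M}) / 2 > 0"
  shows "0 < Gp x \<and> Gp x < 1 \<and> 0 < Gm x \<and> Gm x < 1"
proof -
  have positive: "0 < measure Fp S \<and> 0 < measure Fm S"
    if S: "S \<in> sets borel" and avg: "0 < (measure Fp S + measure Fm S) / 2" for S
  proof -
    have "S \<in> null_sets Fp \<longleftrightarrow> S \<in> null_sets Fm"
      using ac_Fp_Fm ac_Fm_Fp S by (auto simp: absolutely_continuous_def sets_Fp sets_Fm)
    then have "measure Fp S = 0 \<longleftrightarrow> measure Fm S = 0"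
      using S by (auto simp: null_sets_def p.emeasure_eq_measure m.emeasure_eq_measure measure_le_0_iff
          sets_Fp sets_Fm)
    then show ?thesis
      using avg by (metis add.left_neutral add.right_neutral half_gt_zero_iff measure_nonneg order_less_le)
  qed
  have above: "0 < measure Fp {s. x < L s} \<and> 0 < measure Fm {s. x < L s}"
    using unbounded by (intro positive) auto
  have below: "0 < measure Fp {s. L s < x} \<and> 0 < measure Fm {s. L s < x}"
    using unbounded[rule_format, of "- x"] by (intro positive) auto
  have "measure M {s. L s < x} \<le> llr_cdf M L x" if "M = Fp \<or> M = Fm" for M
    using that unfolding llr_cdf_def
    by (auto intro!: p.finite_measure_mono m.finite_measure_mono simp: sets_Fp sets_Fm)
  then show ?thesis
    using above below measure_llr_greater[of Fp x] measure_llr_greater[of Fm x] by force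
qed

end

text \<open>A history lists the actions taken so far, most recent first, with \<open>True\<close> for action \<open>+1\<close>.
  \<open>history_prob G Gp Gm h\<close> is the probability of \<open>h\<close> when the private log-likelihood ratio has
  CDF \<open>G\<close>; it is \<open>G = Gp\<close> in state \<open>+1\<close> and \<open>G = Gm\<close> in state \<open>-1\<close>.\<close>

fun history_llr :: "(real \<Rightarrow> real) \<Rightarrow> (real \<Rightarrow> real) \<Rightarrow> bool list \<Rightarrow> real" where
  "history_llr Gp Gm [] = 0"
| "history_llr Gp Gm (b # h) =
     (let x = history_llr Gp Gm h in if b then x + Dplus Gp Gm x else x + Dminus Gp Gm x)"

fun history_prob :: "(real \<Rightarrow> real) \<Rightarrow> (real \<Rightarrow> real) \<Rightarrow> (real \<Rightarrow> real) \<Rightarrow> bool list \<Rightarrow> real" where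
  "history_prob G Gp Gm [] = 1"
| "history_prob G Gp Gm (b # h) = history_prob G Gp Gm h *
     (if b then 1 - G (- history_llr Gp Gm h) else G (- history_llr Gp Gm h))"

lemma finite_bool_lists_length_eq [simp]: "finite {h :: bool list. length h = n}"
  using finite_lists_length_eq[of "UNIV :: bool set" n] by simp

lemma sum_lists_length_Suc:
  "(\<Sum>h | length h = Suc n. f h) = (\<Sum>h | length h = n. f (True # h) + f (False # h))"
proof -
  have "{h. length h = Suc n} = Cons True ` {h. length h = n} \<union> Cons False ` {h. length h = n}"
    by (auto simp: length_Suc_conv)
  then have "(\<Sum>h | length h = Suc n. f h) =
      (\<Sum>h \<in> Cons True ` {h. length h = n}. f h) + (\<Sum>h \<in> Cons False ` {h. length h = n}. f h)"
    by (simp only:) (rule sum.union_disjoint; auto)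
  then show ?thesis
    by (simp add: sum.reindex sum.distrib)
qed

lemma sum_history_prob: "(\<Sum>h | length h = n. history_prob G Gp Gm h) = 1"
  by (induction n) (simp_all add: sum_lists_length_Suc algebra_simps sum.distrib[symmetric])

locale bayes_cutoff =
  fixes Gp Gm :: "real \<Rightarrow> real"
  assumes cdf_strictly_between: "\<And>x. 0 < Gp x \<and> Gp x < 1 \<and> 0 < Gm x \<and> Gm x < 1"
    and cutoff_optimal: "\<And>l x. exp l * Gp (- l) - Gm (- l) \<le> exp l * Gp x - Gm x"
begin

abbreviation "prob_plus \<equiv> history_prob Gp Gp Gm"
abbreviation "prob_minus \<equiv> history_prob Gm Gp Gm"
abbreviation "llr_of \<equiv> history_llr Gp Gm"

lemma history_prob_nonneg: "G = Gp \<or> G = Gm \<Longrightarrow> 0 \<le> history_prob G Gp Gm h"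
proof (induction h)
  case (Cons b h)
  then show ?case
    using cdf_strictly_between[of "- llr_of h"] by auto
qed simp

lemma prob_plus_eq: "prob_plus h = exp (llr_of h) * prob_minus h"
proof (induction h)
  case (Cons b h)
  define x where "x = llr_of h"
  have G: "0 < Gp (- x)" "Gp (- x) < 1" "0 < Gm (- x)" "Gm (- x) < 1"
    using cdf_strictly_between[of "- x"] by auto
  have exp_step: "exp (x + Dplus Gp Gm x) = exp x * ((1 - Gp (- x)) / (1 - Gm (- x)))"
       "exp (x + Dminus Gp Gm x) = exp x * (Gp (- x) / Gm (- x))"
    using G by (simp_all add: Dplus_def Dminus_def exp_add)
  show ?case
    using Cons.IH G by (cases b) (simp_all add: Let_def x_def[symmetric] exp_step field_simps)
qed simp

lemma next_mistake_le:
  "prob_plus h * Gp (- llr_of h) + prob_minus h * (1 - Gm (- llr_of h))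
     \<le> prob_plus h * Gp x + prob_minus h * (1 - Gm x)"
proof -
  have "prob_minus h * (exp (llr_of h) * Gp (- llr_of h) - Gm (- llr_of h))
      \<le> prob_minus h * (exp (llr_of h) * Gp x - Gm x)"
    using cutoff_optimal history_prob_nonneg[of Gm] by (intro mult_left_mono) auto
  then show ?thesis
    unfolding prob_plus_eq by (simp add: algebra_simps)
qed

text \<open>Only meaningful for \<open>n \<ge> 1\<close>: the action of agent \<open>n\<close> is the head of the history.\<close>

definition mistake_rate :: "nat \<Rightarrow> real" where
  "mistake_rate n = (\<Sum>h | length h = n. if hd h then prob_minus h else prob_plus h) / 2"

lemma mistake_rate_bounds: "0 \<le> mistake_rate n" "mistake_rate n \<le> 1"
proof -
  have "0 \<le> (\<Sum>h | length h = n. if hd h then prob_minus h else prob_plus h)"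
    using history_prob_nonneg by (intro sum_nonneg) auto
  then show "0 \<le> mistake_rate n"
    by (simp add: mistake_rate_def)
  have "(\<Sum>h | length h = n. if hd h then prob_minus h else prob_plus h)
      \<le> (\<Sum>h | length h = n. prob_plus h + prob_minus h)"
    using history_prob_nonneg by (intro sum_mono) auto
  also have "\<dots> = 2"
    by (simp add: sum.distrib sum_history_prob)
  finally show "mistake_rate n \<le> 1"
    by (simp add: mistake_rate_def)
qed

lemma wrong_action_prob_le_mistake_rate:
  "(\<Sum>h | length h = n. if hd h then 0 else prob_plus h) \<le> 2 * mistake_rate n"
  unfolding mistake_rate_def using history_prob_nonneg by (auto intro!: sum_mono)

text \<open>The two maxima bound the probabilities of a fresh and of a repeated mistake by an agent who
  copies action \<open>n\<close> unless her private log-likelihood ratio exceeds \<open>M\<close> in absolute value against it.\<close>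

lemma mistake_rate_Suc_le:
  "mistake_rate (Suc n) \<le> max (Gp (- M)) (1 - Gm M) + max (1 - Gm (- M)) (Gp M) * mistake_rate n"
proof -
  define e where "e = max (Gp (- M)) (1 - Gm M)"
  define r where "r = max (1 - Gm (- M)) (Gp M)"
  have "0 \<le> e"
    using cdf_strictly_between[of "- M"] by (auto simp: e_def)
  have copy_bound: "prob_plus h * Gp (- llr_of h) + prob_minus h * (1 - Gm (- llr_of h))
      \<le> e * (prob_plus h + prob_minus h) + r * (if hd h then prob_minus h else prob_plus h)" for h
  proof -
    have p: "0 \<le> prob_plus h" and m: "0 \<le> prob_minus h"
      using history_prob_nonneg by auto
    show ?thesis
    proof (cases "hd h")
      case True
      have "prob_plus h * Gp (- M) + prob_minus h * (1 - Gm (- M)) \<le> prob_plus h * e + prob_minus h * r"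
        using p m by (intro add_mono mult_left_mono) (auto simp: e_def r_def)
      then show ?thesis
        using True next_mistake_le[of h "- M"] mult_nonneg_nonneg[OF m \<open>0 \<le> e\<close>]
        by (simp add: algebra_simps)
    next
      case False
      have "prob_plus h * Gp M + prob_minus h * (1 - Gm M) \<le> prob_plus h * r + prob_minus h * e"
        using p m by (intro add_mono mult_left_mono) (auto simp: e_def r_def)
      then show ?thesis
        using False next_mistake_le[of h M] mult_nonneg_nonneg[OF p \<open>0 \<le> e\<close>]
        by (simp add: algebra_simps)
    qed
  qed
  have "2 * mistake_rate (Suc n)
      = (\<Sum>h | length h = n. prob_plus h * Gp (- llr_of h) + prob_minus h * (1 - Gm (- llr_of h)))"
    by (simp add: mistake_rate_def sum_lists_length_Suc Let_def add.commute)
  also have "\<dots> \<le> (\<Sum>h | length h = n.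
      e * (prob_plus h + prob_minus h) + r * (if hd h then prob_minus h else prob_plus h))"
    by (intro sum_mono copy_bound)
  also have "\<dots> = 2 * e + r * (2 * mistake_rate n)"
    by (simp add: mistake_rate_def sum.distrib sum_distrib_left[symmetric] sum_history_prob)
  finally show ?thesis
    by (simp add: e_def r_def)
qed

end

fun history :: "(real \<Rightarrow> real) \<Rightarrow> (real \<Rightarrow> real) \<Rightarrow> (real \<Rightarrow> real) \<Rightarrow> (nat \<Rightarrow> real) \<Rightarrow> nat \<Rightarrow> bool list"
where
  "history L Gp Gm w 0 = []"
| "history L Gp Gm w (Suc n) =
     (history_llr Gp Gm (history L Gp Gm w n) + L (w n) > 0) # history L Gp Gm w n"

lemma length_history [simp]: "length (history L Gp Gm w n) = n"
  by (induction n) auto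

lemma pub_ll_eq_history_llr: "pub_ll L Gp Gm w n = history_llr Gp Gm (history L Gp Gm w n)"
  by (induction n) (auto simp: Let_def)

lemma action_eq_minus_iff: "t \<ge> 1 \<Longrightarrow> action L Gp Gm w t = -1 \<longleftrightarrow> \<not> hd (history L Gp Gm w t)"
  by (cases t) (auto simp: action_def pub_ll_eq_history_llr)

lemma history_cong: "(\<And>i. i < n \<Longrightarrow> w i = w' i) \<Longrightarrow> history L Gp Gm w n = history L Gp Gm w' n"
  by (induction n) auto

locale iid_signals =
  fixes F :: "real measure" and L G :: "real \<Rightarrow> real"
  assumes prob_space_F: "prob_space F" and sets_F [measurable_cong]: "sets F = sets borel"
    and borel_measurable_L [measurable]: "L \<in> borel_measurable borel"
    and G_eq: "\<And>x. G x = measure F {s. L s \<le> x}"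
begin

abbreviation "P \<equiv> PiM (UNIV :: nat set) (\<lambda>_. F)"

sublocale f: prob_space F by (rule prob_space_F)
sublocale prob_space P by (rule prob_space_PiM) (simp add: prob_space_F)

lemma space_F [simp]: "space F = UNIV"
  using sets_F by (metis sets_eq_imp_space_eq space_borel)

lemma space_P [simp]: "space P = UNIV"
  by (simp add: space_PiM)

lemma action_set_sets:
  "n \<in> I \<Longrightarrow> {w \<in> space (PiM I (\<lambda>_. F)). (x + L (w n) > 0) = b} \<in> sets (PiM I (\<lambda>_. F))"
  by measurable

lemma history_sets:
  "{..<n} \<subseteq> I \<Longrightarrow> {w \<in> space (PiM I (\<lambda>_. F)). history L Gp Gm w n = h} \<in> sets (PiM I (\<lambda>_. F))"
proof (induction n arbitrary: h)
  case (Suc n)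
  show ?case
  proof (cases h)
    case (Cons b h')
    have "{w \<in> space (PiM I (\<lambda>_. F)). history L Gp Gm w (Suc n) = h} =
        {w \<in> space (PiM I (\<lambda>_. F)). history L Gp Gm w n = h'} \<inter>
        {w \<in> space (PiM I (\<lambda>_. F)). (history_llr Gp Gm h' + L (w n) > 0) = b}"
      using Cons by auto
    moreover have "{..<n} \<subseteq> I" "n \<in> I"
      using Suc.prems by auto
    ultimately show ?thesis
      using Suc.IH by (auto intro!: sets.Int action_set_sets)
  qed simp
qed (cases "h = []"; simp)

lemma indep_vars_coordinates: "indep_vars (\<lambda>_. F) (\<lambda>i w. w i) UNIV"
proof -
  have "distr P (PiM UNIV (\<lambda>_. F)) (\<lambda>w. \<lambda>i\<in>UNIV. w i) = PiM UNIV (\<lambda>i. distr P F (\<lambda>w. w i))"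
    using prob_space_F by (auto simp: restrict_UNIV intro!: PiM_cong distr_PiM_component[symmetric])
  then show ?thesis
    by (subst indep_vars_iff_distr_eq_PiM) (auto intro: measurable_component_singleton)
qed

lemma prob_action: "prob {w. (x + L (w n) > 0) = b} = (if b then 1 - G (- x) else G (- x))"
proof -
  have "prob {w. (x + L (w n) > 0) = b} = measure (distr P F (\<lambda>w. w n)) {s. (x + L s > 0) = b}"
    by (subst measure_distr) (auto simp: vimage_def measurable_component_singleton)
  also have "\<dots> = measure F {s. (x + L s > 0) = b}"
    using prob_space_F by (subst distr_PiM_component) auto
  also have "\<dots> = (if b then 1 - G (- x) else G (- x))"
  proof -
    have "{s. (x + L s > 0) = b} = (if b then UNIV - {s. L s \<le> - x} else {s. L s \<le> - x})"
      by auto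
    then show ?thesis
      using f.prob_compl[of "{s. L s \<le> - x}"] by (simp add: G_eq sets_F)
  qed
  finally show ?thesis .
qed

text \<open>The action history up to agent \<open>n\<close> and the signal of agent \<open>n + 1\<close> are independent.\<close>

lemma prob_history: "length h = n \<Longrightarrow> prob {w. history L Gp Gm w n = h} = history_prob G Gp Gm h"
proof (induction n arbitrary: h)
  case 0
  then show ?case
    using prob_space by simp
next
  case (Suc n)
  obtain b h' where h: "h = b # h'" and len: "length h' = n"
    using Suc.prems by (cases h) auto
  let ?past = "\<lambda>w. restrict w {..<n}" and ?now = "\<lambda>w. restrict w {n}"
  let ?A = "{v \<in> space (PiM {..<n} (\<lambda>_. F)). history L Gp Gm v n = h'}"
  let ?B = "{v \<in> space (PiM {n} (\<lambda>_. F)). (history_llr Gp Gm h' + L (v n) > 0) = b}"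
  have indep: "indep_var (PiM {..<n} (\<lambda>_. F)) ?past (PiM {n} (\<lambda>_. F)) ?now"
    using indep_var_restrict[OF indep_vars_coordinates] by auto
  have past: "history L Gp Gm (?past w) n = history L Gp Gm w n" for w
    by (rule history_cong) auto
  have "prob ((\<lambda>w. (?past w, ?now w)) -` (?A \<times> ?B) \<inter> space P)
      = prob (?past -` ?A \<inter> space P) * prob (?now -` ?B \<inter> space P)"
    by (rule indep_varD[OF indep]) (auto intro: history_sets action_set_sets)
  moreover have "(\<lambda>w. (?past w, ?now w)) -` (?A \<times> ?B) \<inter> space P = {w. history L Gp Gm w (Suc n) = h}"
    using h by (auto simp: past space_PiM)
  moreover have "?past -` ?A \<inter> space P = {w. history L Gp Gm w n = h'}"
    by (auto simp: past space_PiM)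
  moreover have "?now -` ?B \<inter> space P = {w. (history_llr Gp Gm h' + L (w n) > 0) = b}"
    by (auto simp: space_PiM)
  ultimately show ?case
    using h Suc.IH[OF len] prob_action by simp
qed

lemma prob_last_action_minus:
  "prob {w. \<not> hd (history L Gp Gm w n)} = (\<Sum>h | length h = n. if hd h then 0 else history_prob G Gp Gm h)"
proof -
  let ?H = "{h. length h = n \<and> \<not> hd h}"
  have fin: "finite ?H"
    by (rule rev_finite_subset[OF finite_bool_lists_length_eq[of n]]) auto
  have "{w. \<not> hd (history L Gp Gm w n)} = (\<Union>h\<in>?H. {w. history L Gp Gm w n = h})"
    by auto
  then have "prob {w. \<not> hd (history L Gp Gm w n)} = (\<Sum>h\<in>?H. prob {w. history L Gp Gm w n = h})"
    using fin history_sets[of n UNIV]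
    by (auto intro!: finite_measure_finite_Union simp: disjoint_family_on_def)
  also have "\<dots> = (\<Sum>h\<in>?H. history_prob G Gp Gm h)"
    by (intro sum.cong refl prob_history) auto
  also have "\<dots> = (\<Sum>h | length h = n. if hd h then 0 else history_prob G Gp Gm h)"
    by (rule sum.mono_neutral_cong_left) (use fin in \<open>auto\<close>)
  finally show ?thesis .
qed

end

text \<open>Choosing \<open>M = (p + 1) ln (n + 1)\<close> in step \<open>n\<close>, the fresh mistakes \<open>exp (- M)\<close> are of lower
  order than \<open>n\<^sup>-\<^sup>p\<close>, while the factor \<open>1 - c M\<^sup>-\<^sup>k\<close> is eventually below \<open>(n / (n + 1))\<^sup>p\<close>.\<close>

lemma decay_faster_than_polynomial:
  fixes e :: "nat \<Rightarrow> real" and c k x0 p :: real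
  assumes "c > 0" "k > 0" "p > 0"
    and bounded: "\<And>n. e n \<le> 1"
    and recursion: "\<And>n M. n \<ge> 1 \<Longrightarrow> M > x0 \<Longrightarrow> e (Suc n) \<le> exp (- M) + (1 - c * M powr (- k)) * e n"
  shows "\<exists>\<kappa> > 0. \<forall>t \<ge> 1. e t \<le> \<kappa> * real t powr (- p)"
proof -
  define M :: "real \<Rightarrow> real" where "M x = (p + 1) * ln (x + 1)" for x
  have "\<forall>\<^sub>F x in at_top. exp (- M x) + (1 - c * M x powr (- k)) * x powr (- p) \<le> (x + 1) powr (- p)
      \<and> M x > x0 \<and> c * M x powr (- k) \<le> 1"
    using assms(1-3) unfolding M_def minus_mult_left by (intro eventually_conj; real_asymp)
  from eventually_compose_filterlim[OF this filterlim_real_sequentially]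
  obtain N where N: "\<And>n. n \<ge> N \<Longrightarrow>
      exp (- M n) + (1 - c * M n powr (- k)) * real n powr (- p) \<le> (real n + 1) powr (- p)
      \<and> M n > x0 \<and> c * M n powr (- k) \<le> 1"
    unfolding eventually_sequentially by blast
  define \<kappa> where "\<kappa> = max 1 (real (N + 1) powr p)"
  have "\<kappa> \<ge> 1"
    by (simp add: \<kappa>_def)
  have "e t \<le> \<kappa> * real t powr (- p)" if "t \<ge> 1" for t
    using that
  proof (induction t rule: nat_induct_at_least)
    case (Suc n)
    show ?case
    proof (cases "n \<ge> N")
      case True
      note P = N[OF True]
      have "e (Suc n) \<le> exp (- M n) + (1 - c * M n powr (- k)) * e n"
        using recursion[OF Suc.hyps] P by simp
      also have "\<dots> \<le> exp (- M n) + (1 - c * M n powr (- k)) * (\<kappa> * real n powr (- p))"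
        using P Suc.IH by (intro add_left_mono mult_left_mono) auto
      also have "\<dots> \<le> \<kappa> * (exp (- M n) + (1 - c * M n powr (- k)) * real n powr (- p))"
        using \<open>\<kappa> \<ge> 1\<close> by (simp add: algebra_simps)
      also have "\<dots> \<le> \<kappa> * real (Suc n) powr (- p)"
        using P \<open>\<kappa> \<ge> 1\<close> by (intro mult_left_mono) (auto simp: add.commute)
      finally show ?thesis .
    next
      case False
      have "real (Suc n) powr p \<le> real (N + 1) powr p"
        using False \<open>p > 0\<close> by (intro powr_mono2) auto
      then have "1 \<le> \<kappa> * real (Suc n) powr (- p)"
        by (simp add: \<kappa>_def powr_minus field_simps)
      then show ?thesis
        using bounded[of "Suc n"] by linarith
    qed
  qed (use bounded[of 1] \<open>\<kappa> \<ge> 1\<close> in simp)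
  then show ?thesis
    using \<open>\<kappa> \<ge> 1\<close> by (intro exI[of _ \<kappa>]) auto
qed

theorem proposition2:
  fixes Fp Fm :: "real measure" and c k x0 :: real
  defines "L \<equiv> llr Fp Fm"
  defines "Gp \<equiv> llr_cdf Fp L"
  defines "Gm \<equiv> llr_cdf Fm L"
  assumes "prob_space Fp" and "prob_space Fm"
    and "sets Fp = sets borel" and "sets Fm = sets borel"
    and "absolutely_continuous Fp Fm" and "absolutely_continuous Fm Fp"
    and unbounded: "\<forall>M::real.
       (measure Fp {s \<in> space Fp. L s > M} + measure Fm {s \<in> space Fm. L s > M}) / 2 > 0 \<and>
       (measure Fp {s \<in> space Fp. L s < - M} + measure Fm {s \<in> space Fm. L s < - M}) / 2 > 0"
    and "c > 0" and "k > 0" and "x0 > 0"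
    and tails: "\<forall>x > x0. Gm (- x) = c * x powr (- k) \<and> Gp x = 1 - c * x powr (- k)"
  shows "\<exists>\<kappa> > 0. \<forall>t::nat \<ge> 1.
    measure (PiM UNIV (\<lambda>_::nat. Fp)) {w \<in> space (PiM UNIV (\<lambda>_::nat. Fp)). action L Gp Gm w t = -1}
      < \<kappa> * real t powr (- 2.1)"
proof -
  interpret llr_model Fp Fm
    by (rule llr_model.intro) (fact assms)+
  interpret bayes_cutoff Gp Gm
    using llr_cdf_strictly_between llr_cdf_bayes_cutoff_optimal unbounded
    unfolding Gp_def Gm_def L_def by unfold_locales auto
  interpret signals: iid_signals Fp L Gp
    by (rule iid_signals.intro) (auto simp: assms L_def Gp_def llr_cdf_def)
  have "mistake_rate (Suc n) \<le> exp (- M) + (1 - c * M powr (- k)) * mistake_rate n"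
    if "M > x0" for n M
    using mistake_rate_Suc_le[of n M] tails \<open>M > x0\<close>
      llr_cdf_Fp_le_exp[of M] one_minus_llr_cdf_Fm_le_exp[of M] mistake_rate_bounds[of n]
    unfolding Gp_def Gm_def L_def by (auto intro: order_trans)
  then obtain \<kappa> where "\<kappa> > 0" and \<kappa>: "\<And>t. t \<ge> 1 \<Longrightarrow> mistake_rate t \<le> \<kappa> * real t powr (- 2.1)"
    using decay_faster_than_polynomial[of c k "2.1" mistake_rate x0] mistake_rate_bounds assms by auto
  have "signals.prob {w. action L Gp Gm w t = -1} < (2 * \<kappa> + 1) * real t powr (- 2.1)" if "t \<ge> 1" for t
  proof -
    have "signals.prob {w. action L Gp Gm w t = -1} \<le> 2 * mistake_rate t"
      using action_eq_minus_iff[OF that] signals.prob_last_action_minus[of Gp Gm t]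
        wrong_action_prob_le_mistake_rate[of t] by simp
    also have "\<dots> \<le> 2 * (\<kappa> * real t powr (- 2.1))"
      using \<kappa>[OF that] by simp
    also have "\<dots> < (2 * \<kappa> + 1) * real t powr (- 2.1)"
      using that by (simp add: algebra_simps)
    finally show ?thesis .
  qed
  then show ?thesis
    using \<open>\<kappa> > 0\<close> by (intro exI[of _ "2 * \<kappa> + 1"]) auto
qed

end
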